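(* Let $n$ be a positive integer, $p$ a non-negative integer and $m$ an integer. With $\delta_m$, $\widehat{\cdot}$, $\overline{\cdot}$, $A_n,B_n,C_n$ and $K''_\pm=-\frac{m\pi^2(m\pm1)}{4}$ as in the context, for $-\pi<\arg\zeta<\pi$, $$\begin{aligned}S_{-n-2p-1,-n}(\zeta\mathrm{e}^{-m\pi i})&=(-1)^{mn}S_{-n-2p-1,-n}(\zeta)+\frac{(-1)^{(m+1)n+p}}{2^{2p+n}n!\,p!\,(1+n)_p}\zeta^{-n}\Big\{-\delta_m\big[\widehat{A}_n(\zeta)+\widehat{B}_n(\zeta)S_{-1,0}(\zeta)+\zeta\widehat{C}_n(\zeta)S'_{-1,0}(\zeta)\big]\\&\quad+\overline{B}_n(\zeta)\big[K''_+H^{(1)}_0(\zeta)+K''_-H^{(2)}_0(\zeta)\big]-\zeta\overline{C}_n(\zeta)\big[K''_+H^{(1)}_1(\zeta)+K''_-H^{(2)}_1(\zeta)\big]\Big\}.\end{aligned}$$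
   Context: $\delta_m=1+(-1)^{m-1}$; for a polynomial $P$, $\widehat{P}$ is the sum of its odd-degree terms and $\overline{P}=P-\delta_m\widehat{P}$. $H^{(1)}_\nu=J_\nu+iY_\nu$, $H^{(2)}_\nu=J_\nu-iY_\nu$ ($J_\nu,Y_\nu$ Bessel functions), $\psi=\Gamma'/\Gamma$, $(a)_k=a(a+1)\cdots(a+k-1)$. $S_{-1,0}(\zeta)=\frac12\sum_{k\ge0}\frac{(-1)^k(\zeta/2)^{2k}}{(k!)^2}\big\{[\log\frac{\zeta}{2}-\psi(k+1)]^2-\frac12\psi'(k+1)+\frac{\pi^2}{4}\big\}$; $S_{-n-1,-n}(\zeta)=\frac{(-1)^n\zeta^n}{n!}\frac{d^n}{d(\zeta^2)^n}S_{-1,0}(\zeta)$; $S_{-n-2p-1,-n}(\zeta)=\sum_{j=0}^{p-1}\frac{(-1)^j\zeta^{-n-2p+2j}}{2^{2j+2}(-p)_{j+1}(-n-p)_{j+1}}+\frac{(-1)^pS_{-n-1,-n}(\zeta)}{2^{2p}p!(1+n)_p}$. Polynomials: $A_1=B_1=0$, $C_1=1$, and for $n\ge2$: $A_n=-2(n-1)A_{n-1}+\zeta A'_{n-1}+C_{n-1}$, $B_n=-2(n-1)B_{n-1}+\zeta B'_{n-1}-\zeta^2C_{n-1}$, $C_n=-2(n-1)C_{n-1}+B_{n-1}+\zeta C'_{n-1}$; then $S_{-n-1,-n}=\frac{(-1)^n\zeta^{-n}}{2^nn!}[A_n+B_nS_{-1,0}+\zeta C_nS'_{-1,0}]$. Right-hand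 side functions are on the principal branch $-\pi<\arg\zeta<\pi$; $g(\zeta\mathrm{e}^{-m\pi i})$ is the value of the analytic continuation of the principal branch at the point over $\zeta$ with argument $\arg\zeta-m\pi$. *)

theory Defs
  imports "HOL-Complex_Analysis.Complex_Analysis" "HOL-Computational_Algebra.Polynomial"
begin

text \<open>All functions of zeta below are principal-branch values (zeta in the slit plane,
  logarithm = principal Ln).\<close>

definition besselJ :: "nat \<Rightarrow> complex \<Rightarrow> complex" where
  "besselJ n z = (\<Sum>k. (-1) ^ k * (z / 2) ^ (2 * k + n) / (fact k * fact (k + n)))"

text \<open>Bessel function of the second kind of integer order n, principal branch (DLMF 10.8.1).\<close>
definition besselY :: "nat \<Rightarrow> complex \<Rightarrow> complex" where
  "besselY n z =
     - ((z / 2) powi (- int n)) / of_real pi * (\<Sum>k<n. fact (n - k - 1) / fact k * (z\<^sup>2 / 4) ^ k)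
     + 2 / of_real pi * Ln (z / 2) * besselJ n z
     - (z / 2) ^ n / of_real pi *
         (\<Sum>k. (Digamma (of_nat (k + 1)) + Digamma (of_nat (n + k + 1)))
                 * (- z\<^sup>2 / 4) ^ k / (fact k * fact (n + k)))"

definition hankel1 :: "nat \<Rightarrow> complex \<Rightarrow> complex" where
  "hankel1 n z = besselJ n z + \<i> * besselY n z"

definition hankel2 :: "nat \<Rightarrow> complex \<Rightarrow> complex" where
  "hankel2 n z = besselJ n z - \<i> * besselY n z"

definition S10 :: "complex \<Rightarrow> complex" where
  "S10 z = 1 / 2 * (\<Sum>k. (-1) ^ k * (z / 2) ^ (2 * k) / (fact k)\<^sup>2 *
       ((Ln (z / 2) - Digamma (of_nat (k + 1)))\<^sup>2 - Polygamma 1 (of_nat (k + 1)) / 2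
        + (of_real pi)\<^sup>2 / 4))"

text \<open>Derivative with respect to zeta^2: d/d(z^2) = (1/(2z)) d/dz.\<close>
definition dsq :: "(complex \<Rightarrow> complex) \<Rightarrow> complex \<Rightarrow> complex" where
  "dsq f z = deriv f z / (2 * z)"

definition Sn :: "nat \<Rightarrow> complex \<Rightarrow> complex" where
  "Sn n z = (-1) ^ n * z ^ n / fact n * (dsq ^^ n) S10 z"

definition Snp :: "nat \<Rightarrow> nat \<Rightarrow> complex \<Rightarrow> complex" where
  "Snp n p z =
     (\<Sum>j<p. (-1) ^ j * z powi (- int n - 2 * int p + 2 * int j)
        / (2 ^ (2 * j + 2) * pochhammer (- of_nat p) (j + 1) * pochhammer (- of_nat (n + p)) (j + 1)))
     + (-1) ^ p * Sn n z / (2 ^ (2 * p) * fact p * pochhammer (1 + of_nat n) p)"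

text \<open>The polynomials (A_n, B_n, C_n); index 0 is a dummy value.\<close>
fun ABC :: "nat \<Rightarrow> complex poly \<times> complex poly \<times> complex poly" where
  "ABC 0 = (0, 0, 0)"
| "ABC (Suc 0) = (0, 0, 1)"
| "ABC (Suc (Suc k)) =
     (let (a, b, c) = ABC (Suc k); t = of_nat (2 * (k + 1)) in
       (- smult t a + [:0, 1:] * pderiv a + c,
        - smult t b + [:0, 1:] * pderiv b - [:0, 0, 1:] * c,
        - smult t c + b + [:0, 1:] * pderiv c))"

definition polyA :: "nat \<Rightarrow> complex poly" where "polyA n = fst (ABC n)"
definition polyB :: "nat \<Rightarrow> complex poly" where "polyB n = fst (snd (ABC n))"
definition polyC :: "nat \<Rightarrow> complex poly" where "polyC n = snd (snd (ABC n))"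

definition odd_part :: "complex poly \<Rightarrow> complex poly" where
  "odd_part P = (\<Sum>i\<le>degree P. if odd i then monom (coeff P i) i else 0)"

definition delta :: "int \<Rightarrow> complex" where
  "delta m = 1 + (-1) powi (m - 1)"

definition bar_part :: "int \<Rightarrow> complex poly \<Rightarrow> complex poly" where
  "bar_part m P = P - smult (delta m) (odd_part P)"

definition Kpp_plus :: "int \<Rightarrow> complex" where
  "Kpp_plus m = - of_int m * (of_real pi)\<^sup>2 * (of_int m + 1) / 4"
definition Kpp_minus :: "int \<Rightarrow> complex" where
  "Kpp_minus m = - of_int m * (of_real pi)\<^sup>2 * (of_int m - 1) / 4"

end

theory Submission
  imports Defs
begin

text \<open>
  Write \<open>\<zeta> = exp w\<close>. The series defining \<open>S\<^sub>-\<^sub>1\<^sub>,\<^sub>0\<close>, \<open>J\<^sub>0\<close> and \<open>Y\<^sub>0\<close> are polynomials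
  in \<open>Ln (\<zeta>/2) = w - ln 2\<close> whose coefficients are entire power series in \<open>\<zeta>\<^sup>2 = exp (2w)\<close>.
  So \<open>S\<^sub>-\<^sub>1\<^sub>,\<^sub>0 (exp w)\<close> extends to an entire function of \<open>w\<close>, \<open>d/d(\<zeta>\<^sup>2)\<close> becomes
  \<open>exp (-2w)/2 \<cdot> d/dw\<close>, and \<open>S\<^sub>-\<^sub>n\<^sub>-\<^sub>2\<^sub>p\<^sub>-\<^sub>1\<^sub>,\<^sub>-\<^sub>n (exp w)\<close> extends to an entire function
  as well; continuation to \<open>\<zeta> e\<^sup>-\<^sup>m\<^sup>\<pi>\<^sup>i\<close> is evaluation at \<open>w - m\<pi>i\<close>.
  Since \<open>exp (2m\<pi>i) = 1\<close>, the power series do not move and only the polynomial in \<open>w - ln 2\<close>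
  does: the jump of \<open>S\<^sub>-\<^sub>1\<^sub>,\<^sub>0\<close> is a combination of \<open>J\<^sub>0\<close> and \<open>Y\<^sub>0\<close>, namely
  \<open>K''\<^sub>+H\<^sup>(\<^sup>1\<^sup>)\<^sub>0 + K''\<^sub>-H\<^sup>(\<^sup>2\<^sup>)\<^sub>0\<close>, and it solves the lifted Bessel equation \<open>f'' = - exp (2w) f\<close>.
  The lifted operator commutes with the translation, and its \<open>n\<close>-th power maps a solution \<open>f\<close>
  to \<open>exp (-2nw) 2\<^sup>-\<^sup>n (B\<^sub>n f + C\<^sub>n f')\<close>, which produces the Hankel terms.
  Finally \<open>A\<^sub>n, B\<^sub>n, C\<^sub>n\<close> are even polynomials, so the \<open>\<delta>\<^sub>m\<close>-terms vanish.
\<close>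

section \<open>Power series in \<open>exp (2w)\<close>\<close>

definition entire_coeffs :: "(nat \<Rightarrow> complex) \<Rightarrow> bool" where
  "entire_coeffs b \<longleftrightarrow> (\<forall>t. summable (\<lambda>k. b k * t ^ k))"

definition exp2_series :: "(nat \<Rightarrow> complex) \<Rightarrow> complex \<Rightarrow> complex" where
  "exp2_series b w = (\<Sum>k. b k * exp (2 * w) ^ k)"

text \<open>Coefficients of the \<open>w\<close>-derivative of \<open>exp2_series b\<close>, and of its product with \<open>exp (2 * w)\<close>.\<close>

definition deriv_coeffs :: "(nat \<Rightarrow> complex) \<Rightarrow> nat \<Rightarrow> complex" where
  "deriv_coeffs b k = 2 * of_nat k * b k"

definition shift_coeffs :: "(nat \<Rightarrow> complex) \<Rightarrow> nat \<Rightarrow> complex" where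
  "shift_coeffs b k = (if k = 0 then 0 else b (k - 1))"

lemma entire_coeffs_sums: "entire_coeffs b \<Longrightarrow> (\<lambda>k. b k * t ^ k) sums (\<Sum>k. b k * t ^ k)"
  unfolding entire_coeffs_def by (simp add: summable_sums)

lemma entire_coeffs_normI:
  assumes "\<And>k. norm (b k) \<le> C / fact k"
  shows "entire_coeffs b"
  unfolding entire_coeffs_def
proof
  fix t :: complex
  have "summable (\<lambda>k. C * (inverse (fact k) * norm t ^ k))"
    by (intro summable_mult summable_exp)
  moreover have "norm (b k * t ^ k) \<le> C * (inverse (fact k) * norm t ^ k)" for k
  proof -
    have "norm (b k * t ^ k) = norm (b k) * norm t ^ k" by (simp add: norm_mult norm_power)
    also have "\<dots> \<le> C / fact k * norm t ^ k" by (intro mult_right_mono assms) auto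
    finally show ?thesis by (simp add: field_simps)
  qed
  ultimately show "summable (\<lambda>k. b k * t ^ k)"
    by (rule summable_comparison_test'[where N=0])
qed

lemma deriv_coeffs_sums:
  assumes "entire_coeffs b"
  shows "(\<lambda>k. deriv_coeffs b k * t ^ k) sums (2 * t * (\<Sum>k. diffs b k * t ^ k))"
proof -
  have "summable (\<lambda>k. diffs b k * t ^ k)"
    by (rule termdiff_converges_all) (use assms in \<open>auto simp: entire_coeffs_def\<close>)
  then have "(\<lambda>k. 2 * t * (diffs b k * t ^ k)) sums (2 * t * (\<Sum>k. diffs b k * t ^ k))"
    by (intro sums_mult summable_sums)
  moreover have "(\<lambda>k. 2 * t * (diffs b k * t ^ k)) = (\<lambda>k. deriv_coeffs b (Suc k) * t ^ Suc k)"
    by (auto simp: diffs_def deriv_coeffs_def algebra_simps)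
  ultimately have "(\<lambda>k. deriv_coeffs b (Suc k) * t ^ Suc k) sums (2 * t * (\<Sum>k. diffs b k * t ^ k))"
    by simp
  then show ?thesis
    by (subst (asm) sums_Suc_iff) (simp add: deriv_coeffs_def)
qed

lemma entire_coeffs_deriv_coeffs: "entire_coeffs b \<Longrightarrow> entire_coeffs (deriv_coeffs b)"
  using deriv_coeffs_sums unfolding entire_coeffs_def by (blast intro: sums_summable)

lemma exp2_series_has_field_derivative:
  assumes "entire_coeffs b"
  shows "(exp2_series b has_field_derivative exp2_series (deriv_coeffs b) w) (at w)"
proof -
  have series: "((\<lambda>t. \<Sum>k. b k * t ^ k) has_field_derivative (\<Sum>k. diffs b k * t ^ k)) (at t)" for t
    by (rule termdiffs_strong_converges_everywhere) (use assms in \<open>auto simp: entire_coeffs_def\<close>)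
  have "(exp2_series b has_field_derivative
         (\<Sum>k. diffs b k * exp (2 * w) ^ k) * (exp (2 * w) * 2)) (at w)"
    unfolding exp2_series_def[abs_def] by (rule DERIV_chain2[OF series]) (auto intro!: derivative_eq_intros)
  moreover have "(\<Sum>k. diffs b k * exp (2 * w) ^ k) * (exp (2 * w) * 2)
                 = exp2_series (deriv_coeffs b) w"
    using sums_unique[OF deriv_coeffs_sums[OF assms, of "exp (2 * w)"]]
    unfolding exp2_series_def by (simp add: algebra_simps)
  ultimately show ?thesis by simp
qed

lemma exp2_series_holomorphic: "entire_coeffs b \<Longrightarrow> exp2_series b holomorphic_on UNIV"
  using exp2_series_has_field_derivative
  by (auto simp: holomorphic_on_def field_differentiable_def)

lemma shift_coeffs_sums:
  assumes "entire_coeffs b"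
  shows "(\<lambda>k. shift_coeffs b k * t ^ k) sums (t * (\<Sum>k. b k * t ^ k))"
proof -
  have "(\<lambda>k. t * (b k * t ^ k)) sums (t * (\<Sum>k. b k * t ^ k))"
    by (intro sums_mult entire_coeffs_sums assms)
  moreover have "(\<lambda>k. t * (b k * t ^ k)) = (\<lambda>k. shift_coeffs b (Suc k) * t ^ Suc k)"
    by (auto simp: shift_coeffs_def algebra_simps)
  ultimately have "(\<lambda>k. shift_coeffs b (Suc k) * t ^ Suc k) sums (t * (\<Sum>k. b k * t ^ k))"
    by simp
  then show ?thesis
    by (subst (asm) sums_Suc_iff) (simp add: shift_coeffs_def)
qed

lemma exp2_series_shift_coeffs:
  "entire_coeffs b \<Longrightarrow> exp2_series (shift_coeffs b) w = exp (2 * w) * exp2_series b w"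
  using sums_unique[OF shift_coeffs_sums[of b "exp (2 * w)"]] unfolding exp2_series_def by simp

lemma entire_coeffs_shift_coeffs: "entire_coeffs b \<Longrightarrow> entire_coeffs (shift_coeffs b)"
  using shift_coeffs_sums unfolding entire_coeffs_def by (blast intro: sums_summable)

lemma exp2_series_diff:
  "entire_coeffs b \<Longrightarrow> entire_coeffs b' \<Longrightarrow>
     exp2_series (\<lambda>k. b k - b' k) w = exp2_series b w - exp2_series b' w"
  unfolding exp2_series_def entire_coeffs_def by (simp add: suminf_diff left_diff_distrib)

lemma exp2_series_cmult:
  "entire_coeffs b \<Longrightarrow> exp2_series (\<lambda>k. c * b k) w = c * exp2_series b w"
  unfolding exp2_series_def entire_coeffs_def
  by (subst suminf_mult[symmetric]) (auto simp: algebra_simps)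

lemma entire_coeffs_cmult: "entire_coeffs b \<Longrightarrow> entire_coeffs (\<lambda>k. c * b k)"
  unfolding entire_coeffs_def by (auto simp: mult.assoc intro: summable_mult)

lemma exp2_series_periodic: "exp (2 * c) = 1 \<Longrightarrow> exp2_series b (w - c) = exp2_series b w"
  unfolding exp2_series_def by (simp add: right_diff_distrib exp_diff)

definition j0_coeff :: "nat \<Rightarrow> complex" where
  "j0_coeff k = (-1) ^ k / (4 ^ k * (fact k)\<^sup>2)"

definition psi_nat :: "nat \<Rightarrow> complex" where
  "psi_nat k = Digamma (of_nat (k + 1))"

definition y0_coeff :: "nat \<Rightarrow> complex" where
  "y0_coeff k = j0_coeff k * psi_nat k"

definition s10_coeff :: "nat \<Rightarrow> complex" where
  "s10_coeff k = j0_coeff k * ((psi_nat k)\<^sup>2 - Polygamma 1 (of_nat (k + 1)) / 2 + (of_real pi)\<^sup>2 / 4)"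

lemma Suc_square_le_4_power: "(real k + 1)\<^sup>2 \<le> 2 * 4 ^ k"
proof (induction k)
  case (Suc k)
  have "(real (Suc k) + 1)\<^sup>2 \<le> 4 * (real k + 1)\<^sup>2" by (simp add: power2_eq_square algebra_simps)
  also have "\<dots> \<le> 4 * (2 * 4 ^ k)" using Suc by simp
  finally show ?case by simp
qed simp

lemma norm_j0_coeff_mult_square_le: "norm (j0_coeff k) * (real k + 1)\<^sup>2 \<le> 2 / fact k"
proof -
  have "norm (j0_coeff k) * (real k + 1)\<^sup>2 = (real k + 1)\<^sup>2 / (4 ^ k * (fact k)\<^sup>2)"
    by (simp add: j0_coeff_def norm_divide norm_mult norm_power)
  also have "\<dots> \<le> (2 * 4 ^ k) / (4 ^ k * (fact k)\<^sup>2)"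
    by (rule divide_right_mono[OF Suc_square_le_4_power]) simp
  also have "\<dots> = 2 / (fact k)\<^sup>2" by simp
  also have "\<dots> \<le> 2 / fact k"
    by (intro divide_left_mono) (auto simp: power2_eq_square)
  finally show ?thesis .
qed

lemma norm_psi_nat_le: "norm (psi_nat k) \<le> real k + 1"
proof -
  have "harm k \<le> (\<Sum>j<k. 1 :: real)"
    unfolding harm_altdef by (intro sum_mono) (auto simp: inverse_le_1_iff)
  moreover have "psi_nat k = of_real (harm k - euler_mascheroni)"
    unfolding psi_nat_def using Digamma_of_nat[of k, where 'a=complex]
    by (simp add: of_real_harm)
  ultimately show ?thesis
    using harm_nonneg[of k, where 'a=real] euler_mascheroni_pos euler_mascheroni_less_13_over_22
    by (simp only: norm_of_real) simp
qed

lemma norm_Polygamma_1_nat_le: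
  "norm (Polygamma 1 (of_nat (k + 1) :: complex)) \<le> norm (Polygamma 1 (1 :: complex)) + real k"
proof -
  have "Polygamma 1 (1 + of_nat k :: complex) =
         Polygamma 1 1 + (-1) ^ 1 * fact 1 * (\<Sum>j<k. 1 / (1 + of_nat j) ^ Suc 1)"
    by (rule Polygamma_plus_of_nat) (auto dest!: arg_cong[of _ _ Re])
  then have eq: "Polygamma 1 (of_nat (k + 1) :: complex)
                 = Polygamma 1 1 - (\<Sum>j<k. 1 / (1 + of_nat j) ^ 2)"
    by (simp add: add.commute power2_eq_square)
  have "norm (\<Sum>j<k. 1 / (1 + of_nat j :: complex) ^ 2) \<le> (\<Sum>j<k. 1)"
  proof (rule norm_sum[THEN order_trans], intro sum_mono)
    fix j
    have "norm (1 + of_nat j :: complex) = 1 + real j"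
      by (metis norm_of_nat of_nat_Suc add.commute)
    then show "norm (1 / (1 + of_nat j :: complex) ^ 2) \<le> 1"
      by (simp add: norm_divide norm_power)
  qed
  then have "norm (\<Sum>j<k. 1 / (1 + of_nat j :: complex) ^ 2) \<le> real k" by simp
  then show ?thesis
    using norm_triangle_ineq4[of "Polygamma 1 (1 :: complex)" "\<Sum>j<k. 1 / (1 + of_nat j) ^ 2"]
    unfolding eq by linarith
qed

lemma entire_j0_coeff: "entire_coeffs j0_coeff"
proof (rule entire_coeffs_normI)
  fix k
  have "norm (j0_coeff k) * 1 \<le> norm (j0_coeff k) * (real k + 1)\<^sup>2"
    by (intro mult_left_mono) auto
  then show "norm (j0_coeff k) \<le> 2 / fact k"
    using norm_j0_coeff_mult_square_le[of k] by simp
qed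

lemma entire_y0_coeff: "entire_coeffs y0_coeff"
proof (rule entire_coeffs_normI)
  fix k
  have "norm (y0_coeff k) = norm (j0_coeff k) * norm (psi_nat k)"
    by (simp add: y0_coeff_def norm_mult)
  also have "\<dots> \<le> norm (j0_coeff k) * (real k + 1)\<^sup>2"
    by (intro mult_left_mono order_trans[OF norm_psi_nat_le]) (auto simp: power2_eq_square)
  also have "\<dots> \<le> 2 / fact k" by (rule norm_j0_coeff_mult_square_le)
  finally show "norm (y0_coeff k) \<le> 2 / fact k" .
qed

lemma entire_s10_coeff: "entire_coeffs s10_coeff"
proof -
  define P where "P = norm (Polygamma 1 (1 :: complex))"
  show ?thesis
  proof (rule entire_coeffs_normI)
    fix k
    define s where "s = (real k + 1)\<^sup>2"
    have s: "1 \<le> s" "real k \<le> s" "0 \<le> P"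
      by (auto simp: s_def P_def power2_eq_square algebra_simps)
    have "norm ((psi_nat k)\<^sup>2 - Polygamma 1 (of_nat (k + 1)) / 2 + (of_real pi)\<^sup>2 / 4)
          \<le> (norm (psi_nat k))\<^sup>2 + norm (Polygamma 1 (of_nat (k + 1) :: complex)) / 2 + pi\<^sup>2 / 4"
      using norm_triangle_ineq[of "(psi_nat k)\<^sup>2 - Polygamma 1 (of_nat (k + 1)) / 2"
                                  "(of_real pi)\<^sup>2 / 4"]
            norm_triangle_ineq4[of "(psi_nat k)\<^sup>2" "Polygamma 1 (of_nat (k + 1)) / 2"]
      by (simp add: norm_power norm_divide)
    also have "\<dots> \<le> s + (P + real k) / 2 + pi\<^sup>2 / 4"
      using norm_psi_nat_le[of k] norm_Polygamma_1_nat_le[of k] unfolding P_def s_def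
      by (intro add_mono power_mono divide_right_mono) auto
    also have "\<dots> \<le> (2 + P + pi\<^sup>2) * s"
    proof -
      have "P * 1 \<le> P * s" "pi\<^sup>2 * 1 \<le> pi\<^sup>2 * s"
        using s by (intro mult_left_mono; simp)+
      moreover have "(2 + P + pi\<^sup>2) * s = 2 * s + P * s + pi\<^sup>2 * s"
        by (simp add: algebra_simps)
      ultimately show ?thesis using s zero_le_power2[of pi] by argo
    qed
    finally have "norm (s10_coeff k) \<le> norm (j0_coeff k) * ((2 + P + pi\<^sup>2) * s)"
      unfolding s10_coeff_def norm_mult by (intro mult_left_mono) auto
    also have "\<dots> = (2 + P + pi\<^sup>2) * (norm (j0_coeff k) * (real k + 1)\<^sup>2)"
      by (simp add: s_def)
    also have "\<dots> \<le> (2 + P + pi\<^sup>2) * (2 / fact k)"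
      using s(3) by (intro mult_left_mono norm_j0_coeff_mult_square_le) auto
    finally show "norm (s10_coeff k) \<le> 2 * (2 + P + pi\<^sup>2) / fact k"
      by (simp add: mult.commute)
  qed
qed

section \<open>The lifted Bessel equation\<close>

lemma of_nat_Suc_neq_0_complex: "(of_nat k + 1 :: complex) \<noteq> 0" "(1 + of_nat k :: complex) \<noteq> 0"
  by (metis of_nat_Suc of_nat_eq_0_iff add.commute nat.distinct(1))+

lemma j0_coeff_eq_Suc: "j0_coeff k = - (4 * (of_nat k + 1)\<^sup>2) * j0_coeff (Suc k)"
proof -
  have "j0_coeff (Suc k) = - ((-1) ^ k / (4 * 4 ^ k * ((of_nat k + 1) * fact k)\<^sup>2))"
    unfolding j0_coeff_def by (simp add: fact_Suc algebra_simps)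
  also have "\<dots> = - j0_coeff k / (4 * (of_nat k + 1)\<^sup>2)"
    unfolding j0_coeff_def by (simp add: power_mult_distrib)
  finally show ?thesis using of_nat_Suc_neq_0_complex by (simp add: field_simps)
qed

lemma j0_coeff_Suc: "j0_coeff (Suc k) = - j0_coeff k / (4 * (of_nat k + 1)\<^sup>2)"
  using j0_coeff_eq_Suc[of k] of_nat_Suc_neq_0_complex[of k] by (simp add: field_simps)

lemma psi_nat_Suc: "psi_nat (Suc k) = psi_nat k + 1 / (of_nat k + 1)"
proof -
  have "psi_nat (Suc k) = Digamma (of_nat (k + 1) + 1)" unfolding psi_nat_def by simp
  also have "\<dots> = psi_nat k + 1 / of_nat (k + 1)"
    unfolding psi_nat_def by (rule Digamma_plus1) (use of_nat_Suc_neq_0_complex in simp)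
  finally show ?thesis by simp
qed

lemma deriv_coeffs_deriv_coeffs_j0_coeff:
  "deriv_coeffs (deriv_coeffs j0_coeff) = (\<lambda>k. (-1) * shift_coeffs j0_coeff k)"
proof
  fix k show "deriv_coeffs (deriv_coeffs j0_coeff) k = (-1) * shift_coeffs j0_coeff k"
  proof (cases k)
    case (Suc j)
    then show ?thesis
      by (simp add: deriv_coeffs_def shift_coeffs_def j0_coeff_eq_Suc[of j] algebra_simps
                    power2_eq_square)
  qed (simp add: deriv_coeffs_def shift_coeffs_def)
qed

lemma shift_coeffs_y0_coeff:
  "shift_coeffs y0_coeff = (\<lambda>k. 2 * deriv_coeffs j0_coeff k - deriv_coeffs (deriv_coeffs y0_coeff) k)"
proof
  fix k show "shift_coeffs y0_coeff k = 2 * deriv_coeffs j0_coeff k - deriv_coeffs (deriv_coeffs y0_coeff) k"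
  proof (cases k)
    case (Suc j)
    have "y0_coeff j = - (4 * (of_nat j + 1)\<^sup>2) * j0_coeff (Suc j) * (psi_nat (Suc j) - 1 / (of_nat j + 1))"
      unfolding y0_coeff_def by (subst j0_coeff_eq_Suc) (simp add: psi_nat_Suc)
    also have "\<dots> = - (4 * (of_nat j + 1)\<^sup>2) * y0_coeff (Suc j) + 4 * (of_nat j + 1) * j0_coeff (Suc j)"
      using of_nat_Suc_neq_0_complex[of j]
      by (simp add: y0_coeff_def field_simps power2_eq_square)
    finally show ?thesis unfolding Suc
      by (simp add: deriv_coeffs_def shift_coeffs_def algebra_simps power2_eq_square)
  qed (simp add: deriv_coeffs_def shift_coeffs_def)
qed

lemma exp2_series_j0_coeff_ode:
  "exp2_series (deriv_coeffs (deriv_coeffs j0_coeff)) w = - exp (2 * w) * exp2_series j0_coeff w"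
  unfolding deriv_coeffs_deriv_coeffs_j0_coeff
    exp2_series_cmult[OF entire_coeffs_shift_coeffs[OF entire_j0_coeff]]
    exp2_series_shift_coeffs[OF entire_j0_coeff]
  by simp

lemma exp2_series_y0_coeff_ode:
  "exp2_series (deriv_coeffs (deriv_coeffs y0_coeff)) w
   = 2 * exp2_series (deriv_coeffs j0_coeff) w - exp (2 * w) * exp2_series y0_coeff w"
proof -
  have "exp (2 * w) * exp2_series y0_coeff w
        = 2 * exp2_series (deriv_coeffs j0_coeff) w - exp2_series (deriv_coeffs (deriv_coeffs y0_coeff)) w"
    unfolding exp2_series_shift_coeffs[OF entire_y0_coeff, symmetric] shift_coeffs_y0_coeff
    by (simp add: exp2_series_diff exp2_series_cmult entire_coeffs_cmult entire_coeffs_deriv_coeffs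
                  entire_j0_coeff entire_y0_coeff)
  then show ?thesis by simp
qed

text \<open>With \<open>\<zeta> = exp w\<close>, \<open>exp2_series j0_coeff\<close> and \<open>Y0_lift\<close> are \<open>J\<^sub>0\<close> and \<open>\<pi>/2 \<cdot> Y\<^sub>0\<close>;
  the primed functions are their \<open>w\<close>-derivatives.\<close>

definition Y0_lift :: "complex \<Rightarrow> complex" where
  "Y0_lift w = (w - of_real (ln 2)) * exp2_series j0_coeff w - exp2_series y0_coeff w"

definition Y0_lift' :: "complex \<Rightarrow> complex" where
  "Y0_lift' w = exp2_series j0_coeff w + (w - of_real (ln 2)) * exp2_series (deriv_coeffs j0_coeff) w
                - exp2_series (deriv_coeffs y0_coeff) w"

lemma J0_lift'_has_field_derivative:
  "(exp2_series (deriv_coeffs j0_coeff) has_field_derivative - exp (2 * w) * exp2_series j0_coeff w) (at w)"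
  using exp2_series_has_field_derivative[OF entire_coeffs_deriv_coeffs[OF entire_j0_coeff], of w]
  unfolding exp2_series_j0_coeff_ode .

lemma Y0_lift_has_field_derivative: "(Y0_lift has_field_derivative Y0_lift' w) (at w)"
  unfolding Y0_lift_def[abs_def] Y0_lift'_def
  by (auto intro!: derivative_eq_intros exp2_series_has_field_derivative entire_j0_coeff
                   entire_y0_coeff simp: algebra_simps)

lemma Y0_lift'_has_field_derivative: "(Y0_lift' has_field_derivative - exp (2 * w) * Y0_lift w) (at w)"
proof -
  have "(Y0_lift' has_field_derivative
          2 * exp2_series (deriv_coeffs j0_coeff) w
          + (w - of_real (ln 2)) * exp2_series (deriv_coeffs (deriv_coeffs j0_coeff)) w
          - exp2_series (deriv_coeffs (deriv_coeffs y0_coeff)) w) (at w)"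
    unfolding Y0_lift'_def[abs_def]
    by (auto intro!: derivative_eq_intros exp2_series_has_field_derivative entire_j0_coeff
                     entire_y0_coeff entire_coeffs_deriv_coeffs simp: algebra_simps)
  then show ?thesis
    unfolding Y0_lift_def exp2_series_j0_coeff_ode exp2_series_y0_coeff_ode
    by (simp add: algebra_simps)
qed

definition S10_lift :: "complex \<Rightarrow> complex" where
  "S10_lift w = 1 / 2 * ((w - of_real (ln 2))\<^sup>2 * exp2_series j0_coeff w
                 - 2 * (w - of_real (ln 2)) * exp2_series y0_coeff w + exp2_series s10_coeff w)"

lemma S10_lift_holomorphic: "S10_lift holomorphic_on UNIV"
  unfolding S10_lift_def[abs_def]
  using exp2_series_holomorphic[OF entire_j0_coeff] exp2_series_holomorphic[OF entire_y0_coeff]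
        exp2_series_holomorphic[OF entire_s10_coeff]
  by (intro holomorphic_intros) auto

text \<open>For \<open>c = m\<pi>i\<close> this is the jump of \<open>S\<^sub>-\<^sub>1\<^sub>,\<^sub>0\<close> under \<open>\<zeta> \<mapsto> \<zeta> e\<^sup>-\<^sup>m\<^sup>\<pi>\<^sup>i\<close>.\<close>

definition monodromy_corr :: "complex \<Rightarrow> complex \<Rightarrow> complex" where
  "monodromy_corr c w = - c * Y0_lift w + c\<^sup>2 / 2 * exp2_series j0_coeff w"

definition monodromy_corr' :: "complex \<Rightarrow> complex \<Rightarrow> complex" where
  "monodromy_corr' c w = - c * Y0_lift' w + c\<^sup>2 / 2 * exp2_series (deriv_coeffs j0_coeff) w"

lemma S10_lift_shift:
  assumes "exp (2 * c) = 1"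
  shows "S10_lift (w - c) = S10_lift w + monodromy_corr c w"
  unfolding S10_lift_def Y0_lift_def monodromy_corr_def exp2_series_periodic[OF assms]
  by (simp add: algebra_simps power2_eq_square)

lemma half_power_double: "(z / 2) ^ (2 * k) = (z\<^sup>2) ^ k / (4 ^ k :: complex)"
  by (simp add: power_mult power_divide)

lemma j0_coeff_term: "(-1) ^ k * (z / 2) ^ (2 * k) / (fact k)\<^sup>2 = j0_coeff k * (z\<^sup>2) ^ k"
  unfolding j0_coeff_def half_power_double by simp

lemma Ln_half: "z \<noteq> 0 \<Longrightarrow> Ln (z / 2) = Ln z - of_real (ln 2)"
  using Ln_divide_of_real[of 2 z] by simp

lemma exp_double_Ln: "z \<noteq> 0 \<Longrightarrow> exp (2 * Ln z) = z\<^sup>2"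
  using exp_of_nat_mult[of 2 "Ln z"] by simp

lemma exp2_series_Ln_sums: "entire_coeffs b \<Longrightarrow> z \<noteq> 0 \<Longrightarrow>
  (\<lambda>k. b k * (z\<^sup>2) ^ k) sums exp2_series b (Ln z)"
  unfolding exp2_series_def by (simp add: exp_double_Ln entire_coeffs_sums)

lemma S10_eq_S10_lift_Ln:
  assumes "z \<noteq> 0"
  shows "S10 z = S10_lift (Ln z)"
proof -
  define L where "L = Ln z - of_real (ln 2)"
  have summand: "(-1) ^ k * (z / 2) ^ (2 * k) / (fact k)\<^sup>2 *
       ((Ln (z / 2) - Digamma (of_nat (k + 1)))\<^sup>2 - Polygamma 1 (of_nat (k + 1)) / 2 + (of_real pi)\<^sup>2 / 4)
     = L\<^sup>2 * (j0_coeff k * (z\<^sup>2) ^ k) - 2 * L * (y0_coeff k * (z\<^sup>2) ^ k) + s10_coeff k * (z\<^sup>2) ^ k" for k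
    unfolding j0_coeff_term Ln_half[OF assms] L_def[symmetric] psi_nat_def[symmetric]
      y0_coeff_def s10_coeff_def
    by (simp add: power2_eq_square algebra_simps)
  have "(\<lambda>k. L\<^sup>2 * (j0_coeff k * (z\<^sup>2) ^ k) - 2 * L * (y0_coeff k * (z\<^sup>2) ^ k) + s10_coeff k * (z\<^sup>2) ^ k)
        sums (L\<^sup>2 * exp2_series j0_coeff (Ln z) - 2 * L * exp2_series y0_coeff (Ln z)
              + exp2_series s10_coeff (Ln z))"
    using assms entire_j0_coeff entire_y0_coeff entire_s10_coeff
    by (intro sums_add sums_diff sums_mult exp2_series_Ln_sums)
  then show ?thesis
    unfolding S10_def S10_lift_def summand L_def[symmetric] by (simp add: sums_iff)
qed


lemma minus_quarter_square_power: "(- z\<^sup>2 / 4) ^ k = (-1) ^ k * (z\<^sup>2) ^ k / (4 ^ k :: complex)"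
proof -
  have "- z\<^sup>2 / 4 = (-1) * (z\<^sup>2 / 4)" by simp
  then show ?thesis by (simp only: power_mult_distrib power_divide) simp
qed

lemma J0_lift_Ln:
  assumes "z \<noteq> 0"
  shows "exp2_series j0_coeff (Ln z) = besselJ 0 z"
proof -
  have "(-1) ^ k * (z / 2) ^ (2 * k + 0) / (fact k * fact (k + 0)) = j0_coeff k * (z\<^sup>2) ^ k" for k
    using j0_coeff_term[of k z] by (simp add: power2_eq_square)
  then show ?thesis
    unfolding besselJ_def using exp2_series_Ln_sums[OF entire_j0_coeff assms] by (simp add: sums_iff)
qed

lemma Y0_lift_Ln:
  assumes "z \<noteq> 0"
  shows "Y0_lift (Ln z) = of_real pi / 2 * besselY 0 z"
proof -
  have "(Digamma (of_nat (k + 1)) + Digamma (of_nat (0 + k + 1))) * (- z\<^sup>2 / 4) ^ k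
          / (fact k * fact (0 + k)) = 2 * (y0_coeff k * (z\<^sup>2) ^ k)" for k
    unfolding minus_quarter_square_power y0_coeff_def j0_coeff_def psi_nat_def
    by (simp add: power2_eq_square)
  moreover have "(\<lambda>k. 2 * (y0_coeff k * (z\<^sup>2) ^ k)) sums (2 * exp2_series y0_coeff (Ln z))"
    by (intro sums_mult exp2_series_Ln_sums entire_y0_coeff assms)
  ultimately have "besselY 0 z = 2 / of_real pi * (Ln (z / 2) * besselJ 0 z - exp2_series y0_coeff (Ln z))"
    unfolding besselY_def by (simp add: sums_iff algebra_simps)
  then show ?thesis
    unfolding Y0_lift_def J0_lift_Ln[OF assms] Ln_half[OF assms] by simp
qed

lemma J1_summand_eq:
  "(-1) ^ k * (z / 2) ^ (2 * k + 1) / (fact k * fact (k + 1))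
   = j0_coeff k * (z\<^sup>2) ^ k * z / (2 * (of_nat k + 1 :: complex))"
proof -
  have "s * (X * (z / 2)) / (F * (a * F)) = s * X / F\<^sup>2 * z / (2 * a)"
    if "a \<noteq> 0" "F \<noteq> 0" for s X F a :: complex
    using that by (simp add: field_simps power2_eq_square)
  moreover have "(z / 2) ^ (2 * k + 1) = (z / 2) ^ (2 * k) * (z / 2)" by simp
  moreover have "fact (k + 1) = (of_nat k + 1) * (fact k :: complex)" by (simp add: fact_Suc add.commute)
  ultimately have "(-1) ^ k * (z / 2) ^ (2 * k + 1) / (fact k * fact (k + 1))
          = (-1) ^ k * (z / 2) ^ (2 * k) / (fact k)\<^sup>2 * z / (2 * (of_nat k + 1))"
    by (simp only:) (rule, use of_nat_Suc_neq_0_complex in auto)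
  then show ?thesis by (simp only: j0_coeff_term)
qed

lemma J0_lift'_Ln:
  assumes "z \<noteq> 0"
  shows "exp2_series (deriv_coeffs j0_coeff) (Ln z) = - z * besselJ 1 z"
proof -
  define E where "E = exp2_series (deriv_coeffs j0_coeff) (Ln z)"
  define f where "f k = deriv_coeffs j0_coeff k * (z\<^sup>2) ^ k" for k
  define t where "t k = (-1) ^ k * (z / 2) ^ (2 * k + 1) / (fact k * fact (k + 1))" for k
  have "f sums E"
    unfolding f_def E_def
    by (intro exp2_series_Ln_sums entire_coeffs_deriv_coeffs entire_j0_coeff assms)
  then have "(\<lambda>k. f (Suc k)) sums E"
    by (subst sums_Suc_iff) (simp add: f_def deriv_coeffs_def)
  moreover have "f (Suc k) = - z * t k" for k
  proof -
    have alg: "2 * a * (- c / (4 * a\<^sup>2)) * (z\<^sup>2 * X) = - z * (c * X * z / (2 * a))"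
      if "a \<noteq> 0" for a c X :: complex
      using that by (simp add: field_simps power2_eq_square)
    have "f (Suc k) = 2 * (of_nat k + 1) * (- j0_coeff k / (4 * (of_nat k + 1)\<^sup>2))
                      * (z\<^sup>2 * (z\<^sup>2) ^ k)"
      unfolding f_def deriv_coeffs_def j0_coeff_Suc by (simp add: add.commute)
    then show ?thesis
      unfolding t_def J1_summand_eq by (simp only: alg[OF of_nat_Suc_neq_0_complex(1)])
  qed
  ultimately have "(\<lambda>k. - z * t k / (- z)) sums (E / (- z))"
    by (intro sums_divide) simp
  then have "t sums (E / (- z))" using assms by simp
  then show ?thesis
    unfolding besselJ_def E_def t_def using assms by (simp add: sums_iff field_simps)
qed


lemma Y1_summand_eq:
  fixes z :: complex and k :: nat
  defines "a \<equiv> of_nat k + 1 :: complex"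
  shows "(j0_coeff (Suc k) - deriv_coeffs y0_coeff (Suc k)) * (z\<^sup>2) ^ Suc k
         = z\<^sup>2 / 4 * ((Digamma (of_nat (k + 1)) + Digamma (of_nat (1 + k + 1))) * (- z\<^sup>2 / 4) ^ k
                        / (fact k * fact (1 + k)))"
proof -
  have a: "a \<noteq> 0" unfolding a_def by (rule of_nat_Suc_neq_0_complex)
  have alg: "(p + q) * (s * X / P) / (F * (a * F)) = (p + q) * (s / (P * F\<^sup>2) * X / a)"
    if "P \<noteq> 0" "F \<noteq> 0" for p q s X P F :: complex
    using a that by (simp add: field_simps power2_eq_square)
  have fact: "fact (1 + k) = a * (fact k :: complex)" by (simp add: a_def fact_Suc add.commute)
  have psi: "Digamma (of_nat (k + 1)) = psi_nat k" "Digamma (of_nat (1 + k + 1)) = psi_nat (Suc k)"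
    by (simp_all add: psi_nat_def)
  have "(Digamma (of_nat (k + 1)) + Digamma (of_nat (1 + k + 1))) * (- z\<^sup>2 / 4) ^ k
                     / (fact k * fact (1 + k))
                   = (psi_nat k + psi_nat (Suc k)) * (j0_coeff k * (z\<^sup>2) ^ k / a)"
    unfolding minus_quarter_square_power j0_coeff_def psi fact by (rule alg) auto
  also have "\<dots> = (psi_nat k + (psi_nat k + 1 / a)) * (j0_coeff k * (z\<^sup>2) ^ k / a)"
    unfolding psi_nat_Suc a_def ..
  finally have rhs: "(Digamma (of_nat (k + 1)) + Digamma (of_nat (1 + k + 1))) * (- z\<^sup>2 / 4) ^ k
                       / (fact k * fact (1 + k))
                     = (psi_nat k + (psi_nat k + 1 / a)) * (j0_coeff k * (z\<^sup>2) ^ k / a)" .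
  have "(j0_coeff (Suc k) - deriv_coeffs y0_coeff (Suc k)) * (z\<^sup>2) ^ Suc k
        = (- j0_coeff k / (4 * a\<^sup>2) - 2 * a * (- j0_coeff k / (4 * a\<^sup>2)) * (psi_nat k + 1 / a))
          * (z\<^sup>2 * (z\<^sup>2) ^ k)"
    unfolding deriv_coeffs_def y0_coeff_def j0_coeff_Suc psi_nat_Suc a_def by (simp add: algebra_simps)
  also have "\<dots> = z\<^sup>2 / 4 * ((psi_nat k + (psi_nat k + 1 / a)) * (j0_coeff k * (z\<^sup>2) ^ k / a))"
    using a by (simp add: field_simps power2_eq_square)
  finally show ?thesis unfolding rhs .
qed

lemma Y0_lift'_Ln:
  assumes "z \<noteq> 0"
  shows "Y0_lift' (Ln z) = - z * (of_real pi / 2) * besselY 1 z"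
proof -
  define Ea where "Ea = exp2_series j0_coeff (Ln z)"
  define Eq where "Eq = exp2_series (deriv_coeffs y0_coeff) (Ln z)"
  define g where "g k = (j0_coeff k - deriv_coeffs y0_coeff k) * (z\<^sup>2) ^ k" for k
  define v where "v k = (Digamma (of_nat (k + 1)) + Digamma (of_nat (1 + k + 1))) * (- z\<^sup>2 / 4) ^ k
                          / (fact k * fact (1 + k))" for k
  have "g sums (Ea - Eq)"
    unfolding g_def Ea_def Eq_def left_diff_distrib
    by (intro sums_diff exp2_series_Ln_sums entire_j0_coeff entire_coeffs_deriv_coeffs
              entire_y0_coeff assms)
  then have "(\<lambda>k. g (Suc k)) sums (Ea - Eq - 1)"
    by (subst sums_Suc_iff) (simp add: g_def deriv_coeffs_def j0_coeff_def)
  moreover have "g (Suc k) = z\<^sup>2 / 4 * v k" for k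
    unfolding g_def v_def by (rule Y1_summand_eq)
  ultimately have "(\<lambda>k. z\<^sup>2 / 4 * v k / (z\<^sup>2 / 4)) sums ((Ea - Eq - 1) / (z\<^sup>2 / 4))"
    by (intro sums_divide) simp
  then have "v sums ((Ea - Eq - 1) / (z\<^sup>2 / 4))" using assms by simp
  then have V: "(\<Sum>k. v k) = (Ea - Eq - 1) / (z\<^sup>2 / 4)" by (simp add: sums_iff)
  have Y1: "besselY 1 z = - (2 / z) / of_real pi + 2 / of_real pi * Ln (z / 2) * besselJ 1 z
                          - (z / 2) / of_real pi * (\<Sum>k. v k)"
    unfolding besselY_def v_def by (simp add: power_int_minus)
  have "- z * (of_real pi / 2) * besselY 1 z = 1 - z * Ln (z / 2) * besselJ 1 z + z\<^sup>2 / 4 * (\<Sum>k. v k)"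
    unfolding Y1 using assms by (simp add: field_simps power2_eq_square)
  also have "\<dots> = Ea - Eq + Ln (z / 2) * (- z * besselJ 1 z)"
    unfolding V using assms by (simp add: field_simps)
  also have "\<dots> = Y0_lift' (Ln z)"
    unfolding Y0_lift'_def Ea_def Eq_def J0_lift'_Ln[OF assms] Ln_half[OF assms]
    by (simp add: algebra_simps)
  finally show ?thesis ..
qed

section \<open>The operator \<open>d/d(\<zeta>\<^sup>2)\<close>\<close>

text \<open>\<open>d/d(\<zeta>\<^sup>2) = (2\<zeta>)\<^sup>-\<^sup>1 d/d\<zeta>\<close> in the variable \<open>w = Ln \<zeta>\<close>.\<close>

definition dsq_lift :: "(complex \<Rightarrow> complex) \<Rightarrow> complex \<Rightarrow> complex" where
  "dsq_lift F w = deriv F w * exp (- 2 * w) / 2"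

lemma dsq_lift_holomorphic: "F holomorphic_on UNIV \<Longrightarrow> dsq_lift F holomorphic_on UNIV"
  unfolding dsq_lift_def by (intro holomorphic_intros) auto

lemma funpow_dsq_lift_holomorphic: "F holomorphic_on UNIV \<Longrightarrow> (dsq_lift ^^ n) F holomorphic_on UNIV"
  by (induction n) (auto intro: dsq_lift_holomorphic)

lemma holomorphic_UNIV_has_field_derivative:
  "F holomorphic_on UNIV \<Longrightarrow> (F has_field_derivative deriv F w) (at w)"
  using holomorphic_on_imp_differentiable_at DERIV_deriv_iff_field_differentiable by blast

lemma dsq_lift_add:
  assumes "F holomorphic_on UNIV" "H holomorphic_on UNIV"
  shows "dsq_lift (\<lambda>w. F w + H w) = (\<lambda>w. dsq_lift F w + dsq_lift H w)"
  using assms unfolding dsq_lift_def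
  by (auto simp: fun_eq_iff deriv_add holomorphic_on_imp_differentiable_at algebra_simps)

lemma funpow_dsq_lift_add:
  assumes "F holomorphic_on UNIV" "H holomorphic_on UNIV"
  shows "(dsq_lift ^^ n) (\<lambda>w. F w + H w) = (\<lambda>w. (dsq_lift ^^ n) F w + (dsq_lift ^^ n) H w)"
  by (induction n)
     (simp_all add: dsq_lift_add funpow_dsq_lift_holomorphic assms)

lemma dsq_lift_shift:
  assumes "F holomorphic_on UNIV" "exp (2 * c) = 1"
  shows "dsq_lift (\<lambda>w. F (w - c)) = (\<lambda>w. dsq_lift F (w - c))"
proof
  fix w
  have "((\<lambda>w. F (w - c)) has_field_derivative deriv F (w - c) * 1) (at w)"
    by (rule DERIV_chain2[OF holomorphic_UNIV_has_field_derivative[OF assms(1)]])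
       (auto intro!: derivative_eq_intros)
  moreover have "exp (- 2 * (w - c)) = exp (- 2 * w) * exp (2 * c)"
    by (simp add: algebra_simps flip: exp_add)
  ultimately show "dsq_lift (\<lambda>w. F (w - c)) w = dsq_lift F (w - c)"
    unfolding dsq_lift_def using assms(2) by (simp add: DERIV_imp_deriv)
qed

lemma funpow_dsq_lift_shift:
  assumes "F holomorphic_on UNIV" "exp (2 * c) = 1"
  shows "(dsq_lift ^^ n) (\<lambda>w. F (w - c)) = (\<lambda>w. (dsq_lift ^^ n) F (w - c))"
  by (induction n)
     (simp_all add: dsq_lift_shift[OF funpow_dsq_lift_holomorphic[OF assms(1)] assms(2)])

lemma exp_notin_nonpos_Reals:
  assumes "\<bar>Im w\<bar> < pi"
  shows "exp w \<notin> \<real>\<^sub>\<le>\<^sub>0"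
proof
  assume "exp w \<in> \<real>\<^sub>\<le>\<^sub>0"
  with exp_not_eq_zero[of w] have "Im (Ln (exp w)) = pi"
    by (subst Im_Ln_eq_pi) (auto simp: complex_nonpos_Reals_iff less_eq_real_def complex_eq_iff)
  moreover have "Ln (exp w) = w" using assms by (intro Ln_exp) auto
  ultimately show False using assms by simp
qed

lemma abs_Im_Ln_less_pi:
  assumes "z \<notin> \<real>\<^sub>\<le>\<^sub>0"
  shows "\<bar>Im (Ln z)\<bar> < pi"
proof -
  have "z \<noteq> 0" using assms by auto
  then show ?thesis
    using mpi_less_Im_Ln[of z] Im_Ln_less_pi[OF assms] unfolding abs_less_iff by linarith
qed

lemma dsq_exp:
  assumes holo: "F holomorphic_on UNIV" and lift: "\<And>w. \<bar>Im w\<bar> < pi \<Longrightarrow> f (exp w) = F w"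
    and w: "\<bar>Im w\<bar> < pi"
  shows "dsq f (exp w) = dsq_lift F w"
proof -
  define S where "S = - (\<real>\<^sub>\<le>\<^sub>0 :: complex set)"
  have S: "open S" "exp w \<in> S"
    unfolding S_def using exp_notin_nonpos_Reals[OF w]
    by (auto intro: open_Compl closed_nonpos_Reals_complex simp only: Compl_iff)
  have eq: "F (Ln u) = f u" if "u \<in> S" for u
  proof -
    have u: "u \<notin> \<real>\<^sub>\<le>\<^sub>0" using that by (simp add: S_def)
    then have "u \<noteq> 0" by auto
    from lift[OF abs_Im_Ln_less_pi[OF u]] show ?thesis using \<open>u \<noteq> 0\<close> by simp
  qed
  have Lnw: "Ln (exp w) = w" using w by (intro Ln_exp) auto
  have "(F has_field_derivative deriv F w) (at (Ln (exp w)))"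
    unfolding Lnw by (rule holomorphic_UNIV_has_field_derivative[OF holo])
  from DERIV_chain2[OF this has_field_derivative_Ln[OF exp_notin_nonpos_Reals[OF w]]]
  have "(f has_field_derivative deriv F w * inverse (exp w)) (at (exp w))"
    by (rule has_field_derivative_transform_within_open[OF _ S eq])
  then have "deriv f (exp w) = deriv F w * inverse (exp w)" by (rule DERIV_imp_deriv)
  then have "dsq f (exp w) = deriv F w * inverse (exp w) / (2 * exp w)"
    unfolding dsq_def by simp
  also have "\<dots> = deriv F w * (inverse (exp w) * inverse (exp w)) / 2"
    by (simp add: field_simps)
  also have "\<dots> = dsq_lift F w"
    unfolding dsq_lift_def by (simp add: exp_minus[symmetric] exp_add[symmetric])
  finally show ?thesis .
qed

lemma funpow_dsq_exp:
  assumes "F holomorphic_on UNIV" and "\<And>w. \<bar>Im w\<bar> < pi \<Longrightarrow> f (exp w) = F w"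
  shows "\<bar>Im w\<bar> < pi \<Longrightarrow> (dsq ^^ n) f (exp w) = (dsq_lift ^^ n) F w"
proof (induction n arbitrary: w)
  case 0
  show ?case using assms(2)[OF "0"] by simp
next
  case (Suc n)
  have "dsq ((dsq ^^ n) f) (exp w) = dsq_lift ((dsq_lift ^^ n) F) w"
    by (rule dsq_exp[OF funpow_dsq_lift_holomorphic[OF assms(1)] Suc.IH Suc.prems])
  then show ?case by simp
qed


section \<open>The polynomials \<open>A\<^sub>n\<close>, \<open>B\<^sub>n\<close>, \<open>C\<^sub>n\<close>\<close>

lemma polyABC_Suc_Suc:
  "polyA (Suc (Suc n)) = - smult (of_nat (2 * (n + 1))) (polyA (Suc n))
                         + [:0, 1:] * pderiv (polyA (Suc n)) + polyC (Suc n)"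
  "polyB (Suc (Suc n)) = - smult (of_nat (2 * (n + 1))) (polyB (Suc n))
                         + [:0, 1:] * pderiv (polyB (Suc n)) - [:0, 0, 1:] * polyC (Suc n)"
  "polyC (Suc (Suc n)) = - smult (of_nat (2 * (n + 1))) (polyC (Suc n))
                         + polyB (Suc n) + [:0, 1:] * pderiv (polyC (Suc n))"
  by (simp_all add: polyA_def polyB_def polyC_def Let_def split: prod.split)

lemma polyABC_1: "polyA (Suc 0) = 0" "polyB (Suc 0) = 0" "polyC (Suc 0) = 1"
  by (simp_all add: polyA_def polyB_def polyC_def)

text \<open>The recursion preserves evenness, so all \<open>\<delta>\<^sub>m\<close>-terms of the statement vanish.\<close>

lemma polyABC_odd_coeff:
  "odd i \<Longrightarrow> coeff (polyA n) i = 0 \<and> coeff (polyB n) i = 0 \<and> coeff (polyC n) i = 0"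
proof (induction n arbitrary: i rule: ABC.induct)
  case 1
  then show ?case by (simp add: polyA_def polyB_def polyC_def)
next
  case 2
  then show ?case by (cases i) (simp_all add: polyA_def polyB_def polyC_def coeff_1)
next
  case (3 k)
  from \<open>odd i\<close> obtain j where i: "i = Suc j" and j: "even j" by (cases i) auto
  have "coeff (pCons 0 (polyC (Suc k))) j = 0"
    using "3.IH"[of "j - 1"] j by (cases j) auto
  then show ?case
    unfolding i polyABC_Suc_Suc using "3.IH"[of "Suc j"] j by (simp add: coeff_pderiv)
qed

lemma odd_part_eq_0I: "(\<And>i. odd i \<Longrightarrow> coeff P i = 0) \<Longrightarrow> odd_part P = 0"
  unfolding odd_part_def by (intro sum.neutral) auto

lemma odd_part_polyABC: "odd_part (polyA n) = 0" "odd_part (polyB n) = 0" "odd_part (polyC n) = 0"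
  using polyABC_odd_coeff by (auto intro!: odd_part_eq_0I)

lemma bar_part_polyBC: "bar_part m (polyB n) = polyB n" "bar_part m (polyC n) = polyC n"
  unfolding bar_part_def odd_part_polyABC by simp_all

lemma poly_exp_has_field_derivative:
  "((\<lambda>w. poly p (exp w)) has_field_derivative poly (pderiv p) (exp w) * exp w) (at w)"
  by (rule DERIV_chain2[OF poly_DERIV DERIV_exp])

text \<open>For a solution \<open>D\<close> of the lifted Bessel equation, the inhomogeneous \<open>A\<^sub>n\<close>-term of the
  identity expressing \<open>S\<^sub>-\<^sub>n\<^sub>-\<^sub>1\<^sub>,\<^sub>-\<^sub>n\<close> through \<open>A\<^sub>n, B\<^sub>n, C\<^sub>n\<close> is absent.\<close>

lemma funpow_dsq_lift_bessel0:
  assumes D: "\<And>w. (D has_field_derivative D' w) (at w)"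
      and D': "\<And>w. (D' has_field_derivative - exp (2 * w) * D w) (at w)"
  shows "(dsq_lift ^^ Suc n) D
         = (\<lambda>w. (poly (polyB (Suc n)) (exp w) * D w + poly (polyC (Suc n)) (exp w) * D' w)
                * exp (- (2 * of_nat (Suc n)) * w) / 2 ^ Suc n)"
proof (induction n)
  case 0
  show ?case unfolding dsq_lift_def using D by (auto simp: fun_eq_iff polyABC_1 DERIV_imp_deriv)
next
  case (Suc n)
  define PB where "PB = polyB (Suc n)"
  define PC where "PC = polyC (Suc n)"
  define k :: complex where "k = 2 * of_nat (Suc n)"
  define Phi where "Phi w = (poly PB (exp w) * D w + poly PC (exp w) * D' w) * exp (- k * w) / 2 ^ Suc n" for w
  have IH: "(dsq_lift ^^ Suc n) D = Phi" unfolding Suc Phi_def PB_def PC_def k_def ..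
  show ?case
  proof
    fix w
    have "((\<lambda>w. exp (- k * w)) has_field_derivative exp (- k * w) * (- k)) (at w)"
      by (auto intro!: derivative_eq_intros)
    from DERIV_mult[OF DERIV_add[OF DERIV_mult[OF poly_exp_has_field_derivative D]
                                    DERIV_mult[OF poly_exp_has_field_derivative D']] this]
    have dPhi: "deriv Phi w
                = ((poly (pderiv PB) (exp w) * exp w * D w + D' w * poly PB (exp w)
                    + (poly (pderiv PC) (exp w) * exp w * D' w
                       + - exp (2 * w) * D w * poly PC (exp w))) * exp (- k * w)
                   + exp (- k * w) * - k * (poly PB (exp w) * D w + poly PC (exp w) * D' w))
                  / 2 ^ Suc n"
      unfolding Phi_def[abs_def] by (intro DERIV_imp_deriv DERIV_cdivide)
    have e1: "exp (- (2 * of_nat (Suc (Suc n))) * w) = exp (- k * w) * exp (- 2 * w)"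
      by (simp add: k_def algebra_simps flip: exp_add)
    have e2: "exp (2 * w) = exp w * exp w"
      by (simp flip: exp_add)
    have k2: "(of_nat (2 * (Suc n + 1)) :: complex) = k + 2" unfolding k_def by simp
    have LS: "(dsq_lift ^^ Suc (Suc n)) D w = dsq_lift Phi w" using IH by simp
    show "(dsq_lift ^^ Suc (Suc n)) D w
        = (poly (polyB (Suc (Suc n))) (exp w) * D w + poly (polyC (Suc (Suc n))) (exp w) * D' w)
          * exp (- (2 * of_nat (Suc (Suc n))) * w) / 2 ^ Suc (Suc n)"
      unfolding LS dsq_lift_def dPhi e1 e2 k2 polyABC_Suc_Suc(2,3)[of n, folded PB_def PC_def]
      unfolding k_def by (simp add: algebra_simps)
  qed
qed

section \<open>Monodromy\<close>

lemma minus_one_power_int: "(-1 :: complex) powi k = (if even k then 1 else -1)"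
  by (simp add: power_int_minus_left)

lemma exp_int_mult_shifted_Ln:
  assumes "z \<noteq> 0"
  shows "exp (of_int k * (Ln z - of_int m * of_real pi * \<i>)) = z powi k * (-1) powi (k * m)"
proof -
  have "exp (of_int k * (Ln z - of_int m * of_real pi * \<i>))
        = exp (of_int k * Ln z) * exp (of_int (- (k * m)) * (of_real pi * \<i>))"
    by (simp add: algebra_simps flip: exp_add)
  also have "\<dots> = exp (Ln z) powi k * exp (of_real pi * \<i>) powi (- (k * m))"
    by (simp only: exp_power_int)
  finally show ?thesis using assms by (simp add: power_int_minus_one_minus)
qed

lemma exp_double_int_pi_i: "exp (2 * (of_int m * of_real pi * \<i>)) = 1"
proof -
  have "exp (2 * (of_int m * of_real pi * \<i>)) = exp (2 * of_real pi * \<i>) powi m"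
    by (simp add: algebra_simps flip: exp_power_int)
  then show ?thesis by simp
qed

lemma monodromy_corr_has_field_derivative:
  "(monodromy_corr c has_field_derivative monodromy_corr' c w) (at w)"
  unfolding monodromy_corr_def[abs_def] monodromy_corr'_def
  by (auto intro!: derivative_eq_intros Y0_lift_has_field_derivative
                   exp2_series_has_field_derivative entire_j0_coeff)

lemma monodromy_corr'_has_field_derivative:
  "(monodromy_corr' c has_field_derivative - exp (2 * w) * monodromy_corr c w) (at w)"
  unfolding monodromy_corr'_def[abs_def] monodromy_corr_def
  by (auto intro!: derivative_eq_intros Y0_lift'_has_field_derivative J0_lift'_has_field_derivative
           simp: algebra_simps)

lemma monodromy_corr_holomorphic: "monodromy_corr c holomorphic_on UNIV"
  using monodromy_corr_has_field_derivative
  by (auto simp: holomorphic_on_def field_differentiable_def)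

lemma Kpp_hankel_eq:
  "Kpp_plus m * hankel1 \<nu> z + Kpp_minus m * hankel2 \<nu> z
   = - (of_int m * of_real pi * \<i>) * (of_real pi / 2 * besselY \<nu> z)
     + (of_int m * of_real pi * \<i>)\<^sup>2 / 2 * besselJ \<nu> z"
proof -
  have "(of_int m * of_real pi * \<i>)\<^sup>2 = - ((of_int m * of_real pi)\<^sup>2 :: complex)"
    by (simp add: power_mult_distrib)
  then show ?thesis
    unfolding Kpp_plus_def Kpp_minus_def hankel1_def hankel2_def
    by (simp add: field_simps power2_eq_square)
qed

lemma monodromy_corr_Ln:
  "z \<noteq> 0 \<Longrightarrow> monodromy_corr (of_int m * of_real pi * \<i>) (Ln z)
                = Kpp_plus m * hankel1 0 z + Kpp_minus m * hankel2 0 z"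
  unfolding Kpp_hankel_eq monodromy_corr_def by (simp add: J0_lift_Ln Y0_lift_Ln)

lemma monodromy_corr'_Ln:
  "z \<noteq> 0 \<Longrightarrow> monodromy_corr' (of_int m * of_real pi * \<i>) (Ln z)
                = - z * (Kpp_plus m * hankel1 1 z + Kpp_minus m * hankel2 1 z)"
  unfolding Kpp_hankel_eq monodromy_corr'_def
  by (simp add: J0_lift'_Ln Y0_lift'_Ln algebra_simps)

lemma S10_exp:
  assumes "\<bar>Im w\<bar> < pi"
  shows "S10 (exp w) = S10_lift w"
proof -
  have "Ln (exp w) = w" using assms by (intro Ln_exp) auto
  then show ?thesis using S10_eq_S10_lift_Ln[of "exp w"] by simp
qed

definition Sn_lift :: "nat \<Rightarrow> complex \<Rightarrow> complex" where
  "Sn_lift n w = (-1) ^ n * exp (of_nat n * w) / fact n * (dsq_lift ^^ n) S10_lift w"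

lemma Sn_lift_holomorphic: "Sn_lift n holomorphic_on UNIV"
  unfolding Sn_lift_def[abs_def] using funpow_dsq_lift_holomorphic[OF S10_lift_holomorphic]
  by (intro holomorphic_intros) auto

lemma Sn_lift_exp: "\<bar>Im w\<bar> < pi \<Longrightarrow> Sn_lift n w = Sn n (exp w)"
  using funpow_dsq_exp[OF S10_lift_holomorphic S10_exp, of w n]
  unfolding Sn_lift_def Sn_def by (simp add: exp_of_nat_mult)


lemma funpow_dsq_lift_monodromy_corr_Ln:
  assumes "0 < n" "z \<noteq> 0"
  shows "(dsq_lift ^^ n) (monodromy_corr (of_int m * of_real pi * \<i>)) (Ln z)
         = (poly (polyB n) z * (Kpp_plus m * hankel1 0 z + Kpp_minus m * hankel2 0 z)
            - z * poly (polyC n) z * (Kpp_plus m * hankel1 1 z + Kpp_minus m * hankel2 1 z))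
           / (2 ^ n * z ^ n * z ^ n)"
proof -
  obtain k where n: "n = Suc k" using assms(1) by (cases n) auto
  have "exp (- (2 * of_nat n) * Ln z) = inverse (exp (of_nat n * (2 * Ln z)))"
    by (simp add: algebra_simps flip: exp_minus)
  also have "\<dots> = inverse (z ^ n * z ^ n)"
    using assms(2) by (simp add: exp_of_nat_mult exp_double_Ln power2_eq_square power_mult_distrib)
  finally have e: "exp (- (2 * of_nat n) * Ln z) = inverse (z ^ n * z ^ n)" .
  show ?thesis
    unfolding n funpow_dsq_lift_bessel0[OF monodromy_corr_has_field_derivative
                                          monodromy_corr'_has_field_derivative]
    unfolding n[symmetric] exp_Ln[OF assms(2)] e monodromy_corr_Ln[OF assms(2)]
      monodromy_corr'_Ln[OF assms(2)]
    using assms(2) by (simp add: field_simps)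
qed

lemma Sn_lift_monodromy:
  assumes "0 < n" and z: "z \<notin> \<real>\<^sub>\<le>\<^sub>0"
  shows "Sn_lift n (Ln z - of_int m * of_real pi * \<i>)
         = (-1) powi (m * int n) *
           (Sn n z + (-1) ^ n / (2 ^ n * fact n) * z powi (- int n)
              * (poly (polyB n) z * (Kpp_plus m * hankel1 0 z + Kpp_minus m * hankel2 0 z)
                 - z * poly (polyC n) z * (Kpp_plus m * hankel1 1 z + Kpp_minus m * hankel2 1 z)))"
proof -
  define c where "c = of_int m * of_real pi * \<i>"
  define L where "L = (dsq_lift ^^ n) S10_lift"
  define X where "X = poly (polyB n) z * (Kpp_plus m * hankel1 0 z + Kpp_minus m * hankel2 0 z)
                      - z * poly (polyC n) z * (Kpp_plus m * hankel1 1 z + Kpp_minus m * hankel2 1 z)"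
  have c: "exp (2 * c) = 1" unfolding c_def by (rule exp_double_int_pi_i)
  have "z \<noteq> 0" using z by auto
  have "L (Ln z - c) = (dsq_lift ^^ n) (\<lambda>w. S10_lift (w - c)) (Ln z)"
    unfolding L_def funpow_dsq_lift_shift[OF S10_lift_holomorphic c] ..
  also have "\<dots> = (dsq_lift ^^ n) (\<lambda>w. S10_lift w + monodromy_corr c w) (Ln z)"
    unfolding S10_lift_shift[OF c] ..
  also have "\<dots> = L (Ln z) + X / (2 ^ n * z ^ n * z ^ n)"
    unfolding L_def funpow_dsq_lift_add[OF S10_lift_holomorphic monodromy_corr_holomorphic]
      c_def X_def funpow_dsq_lift_monodromy_corr_Ln[OF assms(1) \<open>z \<noteq> 0\<close>] ..
  finally have shift: "L (Ln z - c) = L (Ln z) + X / (2 ^ n * z ^ n * z ^ n)" .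
  have "exp (of_nat n * (Ln z - c)) = z ^ n * (-1) powi (m * int n)"
    using exp_int_mult_shifted_Ln[OF \<open>z \<noteq> 0\<close>, of "int n" m] unfolding c_def
    by (simp add: mult.commute)
  moreover have "Sn n z = (-1) ^ n * z ^ n / fact n * L (Ln z)"
    using Sn_lift_exp[OF abs_Im_Ln_less_pi[OF z], of n] \<open>z \<noteq> 0\<close>
    unfolding Sn_lift_def L_def by (simp add: exp_of_nat_mult)
  ultimately show ?thesis
    unfolding Sn_lift_def L_def[symmetric] c_def[symmetric] X_def[symmetric] shift
    using \<open>z \<noteq> 0\<close> by (simp add: power_int_minus field_simps)
qed


definition Snp_lift :: "nat \<Rightarrow> nat \<Rightarrow> complex \<Rightarrow> complex" where
  "Snp_lift n p w =
     (\<Sum>j<p. (-1) ^ j * exp (of_int (- int n - 2 * int p + 2 * int j) * w)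
        / (2 ^ (2 * j + 2) * pochhammer (- of_nat p) (j + 1) * pochhammer (- of_nat (n + p)) (j + 1)))
     + (-1) ^ p * Sn_lift n w / (2 ^ (2 * p) * fact p * pochhammer (1 + of_nat n) p)"

lemma Snp_lift_holomorphic: "Snp_lift n p holomorphic_on UNIV"
  unfolding Snp_lift_def[abs_def]
  by (intro holomorphic_intros Sn_lift_holomorphic) (simp_all only:)

lemma Snp_lift_exp: "\<bar>Im w\<bar> < pi \<Longrightarrow> Snp_lift n p w = Snp n p (exp w)"
  unfolding Snp_lift_def Snp_def by (simp only: Sn_lift_exp exp_power_int)

lemma pochhammer_Suc_of_nat_neq_0: "pochhammer (1 + of_nat n :: complex) p \<noteq> 0"
proof -
  have "pochhammer (1 + of_nat n :: complex) p = of_nat (pochhammer (1 + n) p)"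
    using pochhammer_of_nat[of "1 + n" p, where 'a=complex] by simp
  then show ?thesis using pochhammer_pos[of "1 + n" p] by simp
qed

lemma Snp_lift_monodromy:
  assumes "0 < n" and z: "z \<notin> \<real>\<^sub>\<le>\<^sub>0"
  shows "Snp_lift n p (Ln z - of_int m * of_real pi * \<i>)
         = (-1) powi (m * int n) * Snp n p z
           + (-1) powi ((m + 1) * int n + int p)
               / (2 ^ (2 * p + n) * fact n * fact p * pochhammer (1 + of_nat n) p)
               * z powi (- int n)
               * (poly (polyB n) z * (Kpp_plus m * hankel1 0 z + Kpp_minus m * hankel2 0 z)
                  - z * poly (polyC n) z * (Kpp_plus m * hankel1 1 z + Kpp_minus m * hankel2 1 z))"
proof -
  have "z \<noteq> 0" using z by auto
  have parity: "(-1) powi ((- int n - 2 * int p + 2 * int j) * m) = (-1 :: complex) powi (m * int n)" for j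
  proof -
    have "(- int n - 2 * int p + 2 * int j) * m = - (m * int n) + 2 * (m * (int j - int p))"
      by (simp add: algebra_simps)
    then show ?thesis by (simp add: minus_one_power_int)
  qed
  have sum: "exp (of_int (- int n - 2 * int p + 2 * int j) * (Ln z - of_int m * of_real pi * \<i>))
             = z powi (- int n - 2 * int p + 2 * int j) * (-1) powi (m * int n)" for j
    unfolding exp_int_mult_shifted_Ln[OF \<open>z \<noteq> 0\<close>] parity ..
  have sign: "(-1) powi ((m + 1) * int n + int p) = (-1) powi (m * int n) * (-1) ^ n * (-1 :: complex) ^ p"
    by (simp add: distrib_right power_int_add)
  have alg: "(\<Sum>j<p. a j * (y j * s) / d j) + b * (s * (S + c / (e * f) * Z * X)) / (g * h * k)
             = s * ((\<Sum>j<p. a j * y j / d j) + b * S / (g * h * k))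
               + s * c * b / (g * e * f * h * k) * Z * X"
    if "g \<noteq> 0" "e \<noteq> 0" "f \<noteq> 0" "h \<noteq> 0" "k \<noteq> 0"
    for a y d :: "nat \<Rightarrow> complex" and s b c g e f h k S Z X :: complex
  proof -
    have "(\<Sum>j<p. a j * (y j * s) / d j) = s * (\<Sum>j<p. a j * y j / d j)"
      by (simp add: sum_distrib_left algebra_simps)
    then show ?thesis using that by (simp add: field_simps)
  qed
  show ?thesis
    unfolding Snp_lift_def Snp_def sum Sn_lift_monodromy[OF assms] sign power_add
    by (rule alg) (simp_all add: pochhammer_Suc_of_nat_neq_0)
qed

theorem lemma3p10:
  fixes n p :: nat and m :: int and \<zeta> :: complex
  assumes "n > 0" and "\<zeta> \<noteq> 0" and "- pi < Arg \<zeta>" and "Arg \<zeta> < pi"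
  shows "\<exists>G. G holomorphic_on UNIV
           \<and> (\<forall>w. \<bar>Im w\<bar> < pi \<longrightarrow> G w = Snp n p (exp w))
           \<and> G (Ln \<zeta> - of_int m * of_real pi * \<i>) =
               (-1) powi (m * int n) * Snp n p \<zeta>
             + (-1) powi ((m + 1) * int n + int p)
                 / (2 ^ (2 * p + n) * fact n * fact p * pochhammer (1 + of_nat n) p)
                 * \<zeta> powi (- int n)
                 * ( - delta m * (poly (odd_part (polyA n)) \<zeta>
                                  + poly (odd_part (polyB n)) \<zeta> * S10 \<zeta>
                                  + \<zeta> * poly (odd_part (polyC n)) \<zeta> * deriv S10 \<zeta>)
                     + poly (bar_part m (polyB n)) \<zeta>
                         * (Kpp_plus m * hankel1 0 \<zeta> + Kpp_minus m * hankel2 0 \<zeta>)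
                     - \<zeta> * poly (bar_part m (polyC n)) \<zeta>
                         * (Kpp_plus m * hankel1 1 \<zeta> + Kpp_minus m * hankel2 1 \<zeta>))"
proof -
  have "\<zeta> \<notin> \<real>\<^sub>\<le>\<^sub>0"
    using assms(2,4) Arg_eq_pi_iff[of \<zeta>]
    by (auto simp: complex_nonpos_Reals_iff complex_is_Real_iff complex_eq_iff)
  note monodromy = Snp_lift_monodromy[OF assms(1) this]
  have odd_terms: "- delta m * (poly (odd_part (polyA n)) \<zeta> + poly (odd_part (polyB n)) \<zeta> * S10 \<zeta>
                     + \<zeta> * poly (odd_part (polyC n)) \<zeta> * deriv S10 \<zeta>) = 0"
    by (simp add: odd_part_polyABC)
  show ?thesis
    unfolding odd_terms bar_part_polyBC add_0_left
    by (intro exI[of _ "Snp_lift n p"] conjI allI impI Snp_lift_holomorphic Snp_lift_exp monodromy)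
qed

end
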